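(* Consider any $(M,N)$-VLFT code for a $K$-user DM-BC, and fix $j\in\{1,\dots,K\}$ with $P_{Y_j|X}(y|x)>0$ for all $x\in\mathcal X$, $y\in\mathcal Y_j$. Then for every $n\ge0$, every $y\in\mathcal Y_j$ and every realization $y_j^n$ of $Y_j^n$ with $\mathbb P(Y_j^n=y_j^n)>0$ and $\mathcal H(W|Y_j^n=y_j^n)>0$, $$\ln\mathcal H(W|Y_j^n=y_j^n)-\ln\mathcal H(W|Y_j^{n+1}=(y_j^n,y))\le\ln T_j.$$
   Context: A $K$-user discrete memoryless broadcast channel (DM-BC) consists of a finite input alphabet $\mathcal X$, finite output alphabets $\mathcal Y_1,\dots,\mathcal Y_K$ and a transition law $P_{Y_1,\dots,Y_K|X}$; $P_{Y_j|X}$ denotes its $j$-th marginal. Logarithms are natural. An $(M,N)$-VLFT code ($M$ a positive integer, $N>0$ real) consists of: a message $W$ uniform on $\mathcal W=\{1,\dots,M\}$; encoders $f_n:\mathcal W\times\mathcal Y_1^{n-1}\times\cdots\times\mathcal Y_K^{n-1}\to\mathcal X$, $n\ge1$, with $X_n=f_n(W,Y_1^{n-1},\dots,Y_K^{n-1})$, where given $(W,X^n,Y_1^{n-1},\dots,Y_K^{n-1})$ the tuple $(Y_{1,n},\dots,Y_{K,n})$ is distributed as $P_{Y_1,\dots,Y_K|X}(\cdot|X_n)$; decoders $g^{(j)}_n:\mathcal Y_j^n\to\mathcal W$; for each $j$ a stopping time $\tau_j$ of the filtration $\{\sigma(Y_j^n)\}_{n\ge0}$, with $\tau=\max_j\tau_j$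 satisfying $\mathbb E[\tau]\le N$. For a realization $z$ of a random vector $Z$, $\mathcal H(W|Z=z):=-\sum_{w\in\mathcal W}\mathbb P(W=w|Z=z)\ln\mathbb P(W=w|Z=z)$. $T_j=\max_{x,x'\in\mathcal X,\,y\in\mathcal Y_j}\frac{P_{Y_j|X}(y|x)}{P_{Y_j|X}(y|x')}$. *)

theory Defs
  imports Complex_Main "HOL-Library.Extended_Nonnegative_Real"
begin

(* The output alphabet of user j is the
   finite set Y j (a subset of a common carrier type 'y); the input alphabet
   is the finite type 'x.  A channel output tuple (y_1,...,y_K) is an
   extensional function in PiE {1..K} Y.  PY x ys = P_{Y_1..Y_K|X}(ys|x). *)

definition dmbc :: "nat \<Rightarrow> (nat \<Rightarrow> 'y set) \<Rightarrow> ('x::finite \<Rightarrow> (nat \<Rightarrow> 'y) \<Rightarrow> real) \<Rightarrow> bool" where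
  "dmbc K Y PY \<longleftrightarrow>
     (\<forall>j\<in>{1..K}. finite (Y j)) \<and>
     (\<forall>x ys. 0 \<le> PY x ys) \<and>
     (\<forall>x. (\<Sum>ys\<in>PiE {1..K} Y. PY x ys) = 1)"

definition marg :: "nat \<Rightarrow> (nat \<Rightarrow> 'y set) \<Rightarrow> ('x \<Rightarrow> (nat \<Rightarrow> 'y) \<Rightarrow> real) \<Rightarrow> nat \<Rightarrow> 'x \<Rightarrow> 'y \<Rightarrow> real" where
  "marg K Y PY j x y = (\<Sum>ys\<in>{ys\<in>PiE {1..K} Y. ys j = y}. PY x ys)"

definition Tconst :: "nat \<Rightarrow> (nat \<Rightarrow> 'y set) \<Rightarrow> ('x::finite \<Rightarrow> (nat \<Rightarrow> 'y) \<Rightarrow> real) \<Rightarrow> nat \<Rightarrow> real" where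
  "Tconst K Y PY j = Max {marg K Y PY j x y / marg K Y PY j x' y | x x' y. y \<in> Y j}"

text \<open>Joint output histories of length n: (Y_1^n,...,Y_K^n), stored time-wise.\<close>
definition hists :: "nat \<Rightarrow> (nat \<Rightarrow> 'y set) \<Rightarrow> nat \<Rightarrow> (nat \<Rightarrow> 'y) list set" where
  "hists K Y n = {hs. length hs = n \<and> set hs \<subseteq> PiE {1..K} Y}"

definition proj :: "nat \<Rightarrow> (nat \<Rightarrow> 'y) list \<Rightarrow> 'y list" where
  "proj j hs = map (\<lambda>ys. ys j) hs"

text \<open>Encoder: f n w h = X_n for n \<ge> 1, where h is the joint feedback history
  (Y_1^{n-1},...,Y_K^{n-1}).  pjoint gives P(Y_1^n..Y_K^n = hs | W = w).\<close>
definition pjoint :: "('x \<Rightarrow> (nat \<Rightarrow> 'y) \<Rightarrow> real) \<Rightarrow> (nat \<Rightarrow> nat \<Rightarrow> (nat \<Rightarrow> 'y) list \<Rightarrow> 'x)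
    \<Rightarrow> nat \<Rightarrow> (nat \<Rightarrow> 'y) list \<Rightarrow> real" where
  "pjoint PY f w hs = (\<Prod>t<length hs. PY (f (Suc t) w (take t hs)) (hs ! t))"

text \<open>P(W = w, Y_j^n = yj), W uniform on {1..M}.\<close>
definition pWY :: "nat \<Rightarrow> (nat \<Rightarrow> 'y set) \<Rightarrow> ('x \<Rightarrow> (nat \<Rightarrow> 'y) \<Rightarrow> real) \<Rightarrow> (nat \<Rightarrow> nat \<Rightarrow> (nat \<Rightarrow> 'y) list \<Rightarrow> 'x)
    \<Rightarrow> nat \<Rightarrow> nat \<Rightarrow> nat \<Rightarrow> 'y list \<Rightarrow> real" where
  "pWY K Y PY f M j w yj =
     (\<Sum>hs\<in>{hs\<in>hists K Y (length yj). proj j hs = yj}. pjoint PY f w hs) / real M"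

definition pY :: "nat \<Rightarrow> (nat \<Rightarrow> 'y set) \<Rightarrow> ('x \<Rightarrow> (nat \<Rightarrow> 'y) \<Rightarrow> real) \<Rightarrow> (nat \<Rightarrow> nat \<Rightarrow> (nat \<Rightarrow> 'y) list \<Rightarrow> 'x)
    \<Rightarrow> nat \<Rightarrow> nat \<Rightarrow> 'y list \<Rightarrow> real" where
  "pY K Y PY f M j yj = (\<Sum>w\<in>{1..M}. pWY K Y PY f M j w yj)"

text \<open>Conditional entropy H(W | Y_j^n = yj) (natural log; 0 ln 0 = 0).\<close>
definition condH :: "nat \<Rightarrow> (nat \<Rightarrow> 'y set) \<Rightarrow> ('x \<Rightarrow> (nat \<Rightarrow> 'y) \<Rightarrow> real) \<Rightarrow> (nat \<Rightarrow> nat \<Rightarrow> (nat \<Rightarrow> 'y) list \<Rightarrow> 'x)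
    \<Rightarrow> nat \<Rightarrow> nat \<Rightarrow> 'y list \<Rightarrow> real" where
  "condH K Y PY f M j yj =
     - (\<Sum>w\<in>{1..M}. let p = pWY K Y PY f M j w yj / pY K Y PY f M j yj in p * ln p)"

text \<open>Stopping times: stop j m ys means "tau_j = m is reached at time m given Y_j^m = ys";
  tau_j = LEAST m. stop j m (Y_j^m), which is an arbitrary stopping time of the
  filtration of Y_j.  P(tau > n) with tau = max_j tau_j.\<close>
definition p_tau_gt :: "nat \<Rightarrow> (nat \<Rightarrow> 'y set) \<Rightarrow> ('x \<Rightarrow> (nat \<Rightarrow> 'y) \<Rightarrow> real) \<Rightarrow> (nat \<Rightarrow> nat \<Rightarrow> (nat \<Rightarrow> 'y) list \<Rightarrow> 'x)
    \<Rightarrow> nat \<Rightarrow> (nat \<Rightarrow> nat \<Rightarrow> 'y list \<Rightarrow> bool) \<Rightarrow> nat \<Rightarrow> real" where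
  "p_tau_gt K Y PY f M stop n =
     (\<Sum>w\<in>{1..M}. \<Sum>hs\<in>{hs\<in>hists K Y n. \<exists>j\<in>{1..K}. \<forall>m\<le>n. \<not> stop j m (take m (proj j hs))}.
        pjoint PY f w hs) / real M"

text \<open>(M,N)-VLFT code (f encoders, g decoders g j n : Y_j^n -> W, stopping rules stop),
  with E[tau] = sum_n P(tau > n) <= N.\<close>
definition vlft_code :: "nat \<Rightarrow> (nat \<Rightarrow> 'y set) \<Rightarrow> ('x \<Rightarrow> (nat \<Rightarrow> 'y) \<Rightarrow> real) \<Rightarrow> nat \<Rightarrow> real
    \<Rightarrow> (nat \<Rightarrow> nat \<Rightarrow> (nat \<Rightarrow> 'y) list \<Rightarrow> 'x) \<Rightarrow> (nat \<Rightarrow> nat \<Rightarrow> 'y list \<Rightarrow> nat)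
    \<Rightarrow> (nat \<Rightarrow> nat \<Rightarrow> 'y list \<Rightarrow> bool) \<Rightarrow> bool" where
  "vlft_code K Y PY M N f g stop \<longleftrightarrow>
     1 \<le> M \<and> 0 < N \<and>
     (\<forall>j\<in>{1..K}. \<forall>n ys. length ys = n \<and> set ys \<subseteq> Y j \<longrightarrow> g j n ys \<in> {1..M}) \<and>
     (\<Sum>n. ennreal (p_tau_gt K Y PY f M stop n)) \<le> ennreal N"

end

theory Submission
  imports Defs
begin

text \<open>
  Write \<open>a w = P(W = w, Y\<^sub>j\<^sup>n = y\<^sub>j\<^sup>n)\<close> and \<open>b w = P(W = w, Y\<^sub>j\<^sup>n\<^sup>+\<^sup>1 = (y\<^sub>j\<^sup>n, y))\<close>.
  Summing over the joint feedback histories, \<open>b w\<close> is \<open>a w\<close> times an average of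
  \<open>P\<^sub>Y\<^sub>j\<^sub>|\<^sub>X(y|x)\<close> over the inputs \<open>x\<close> the encoder sends at time \<open>n + 1\<close>, so \<open>m a \<le> b \<le> m' a\<close>
  with \<open>m, m'\<close> the extreme values of \<open>P\<^sub>Y\<^sub>j\<^sub>|\<^sub>X(y|\<cdot>)\<close>, and \<open>m'/m \<le> T\<^sub>j\<close>.
  After normalisation, the posterior \<open>p\<close> of each message and its complement \<open>1 - p\<close> both
  change by a factor of at most \<open>T\<^sub>j\<close>, hence so does \<open>-p ln p\<close>. Summing over the messages,
  \<open>H(W|y\<^sub>j\<^sup>n) \<le> T\<^sub>j H(W|y\<^sub>j\<^sup>n, y)\<close>, and taking logarithms gives the claim.
\<close>

lemma neg_xlnx_div_one_minus_mono:
  fixes t s :: real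
  assumes "0 < t" "t \<le> s" "s < 1"
  shows "- t * ln t / (1 - t) \<le> - s * ln s / (1 - s)"
proof (rule DERIV_nonneg_imp_increasing_open[OF assms(2)])
  fix x :: real
  assume "t < x" "x < s"
  hence x: "0 < x" "x < 1" using assms by auto
  have "DERIV (\<lambda>x. - x * ln x / (1 - x)) x :> ((x - 1) - ln x) / ((1 - x) * (1 - x))"
    using x by (auto intro!: derivative_eq_intros simp: field_simps) (simp add: minus_divide_left)
  moreover have "ln x \<le> x - 1"
    using ln_le_minus_one x by simp
  ultimately show "\<exists>d. DERIV (\<lambda>x. - x * ln x / (1 - x)) x :> d \<and> 0 \<le> d"
    by fastforce
next
  show "continuous_on {t..s} (\<lambda>x. - x * ln x / (1 - x))"
    using assms by (intro continuous_intros) auto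
qed

text \<open>
  If \<open>s \<le> t\<close> then \<open>-t ln t \<le> T s (-ln t) \<le> T s (-ln s)\<close>; otherwise write
  \<open>-x ln x = \<phi>(x) (1 - x)\<close> with \<open>\<phi>\<close> increasing and use the bound on the complements.
\<close>
lemma neg_xlnx_le_scaled:
  fixes t s T :: real
  assumes "0 \<le> t" "t \<le> 1" "0 \<le> s" "s \<le> 1" "1 \<le> T"
    and t_le: "t \<le> T * s" and compl_le: "1 - t \<le> T * (1 - s)"
  shows "- (t * ln t) \<le> T * (- (s * ln s))"
proof -
  have s_term_nonneg: "0 \<le> - (s * ln s)"
    using assms by (cases "s = 0") (auto simp: mult_nonneg_nonpos)
  consider "t = 0" | "0 < t" "s \<le> t" | "0 < t" "t < s"
    using assms by force
  then show ?thesis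
  proof cases
    case 1
    have "0 \<le> T * - (s * ln s)"
      using s_term_nonneg assms by (intro mult_nonneg_nonneg) auto
    with 1 show ?thesis by simp
  next
    case 2
    have "0 < s" using 2 assms by (cases "s = 0") auto
    have "t * (- ln t) \<le> (T * s) * (- ln t)"
      using assms 2 by (intro mult_right_mono) auto
    also have "\<dots> \<le> T * (s * (- ln s))"
      using 2 \<open>0 < s\<close> assms by (auto intro!: mult_left_mono)
    finally show ?thesis by simp
  next
    case 3
    have "s < 1" using 3 compl_le assms by (cases "s = 1") auto
    let ?\<phi> = "\<lambda>x::real. - x * ln x / (1 - x)"
    have "0 \<le> ?\<phi> t"
      using 3 \<open>s < 1\<close> by (auto intro!: divide_nonpos_pos mult_nonneg_nonpos)
    have "- (t * ln t) = ?\<phi> t * (1 - t)"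
      using 3 \<open>s < 1\<close> by (simp add: field_simps)
    also have "\<dots> \<le> ?\<phi> t * (T * (1 - s))"
      by (rule mult_left_mono[OF compl_le \<open>0 \<le> ?\<phi> t\<close>])
    also have "\<dots> \<le> ?\<phi> s * (T * (1 - s))"
      using 3 \<open>s < 1\<close> assms
      by (intro mult_right_mono neg_xlnx_div_one_minus_mono) auto
    also have "\<dots> = T * - (s * ln s)"
      using \<open>s < 1\<close> by (simp add: field_simps)
    finally show ?thesis .
  qed
qed

lemma normalized_le_scaled:
  fixes a b A B m m' :: real
  assumes "0 \<le> a" "m * a \<le> b" "B \<le> m' * A" "0 < A" "0 < B" "0 < m" "m' / m \<le> T"
  shows "a / A \<le> T * (b / B)"
proof -
  have "0 < m'"
    using assms by (smt (verit) mult_nonpos_nonneg)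
  have "0 \<le> T"
    using assms \<open>0 < m'\<close> by (smt (verit) divide_pos_pos)
  have "a / A = (m' / m) * (m * a / (m' * A))"
    using assms \<open>0 < m'\<close> by (simp add: field_simps)
  also have "\<dots> \<le> (m' / m) * (m * a / B)"
    using assms \<open>0 < m'\<close> by (intro mult_left_mono divide_left_mono) auto
  also have "\<dots> \<le> T * (b / B)"
    using assms \<open>0 < m'\<close> \<open>0 \<le> T\<close> by (intro mult_mono divide_right_mono) auto
  finally show ?thesis .
qed

definition entropy_of_weights :: "'a set \<Rightarrow> ('a \<Rightarrow> real) \<Rightarrow> real" where
  "entropy_of_weights S a = - (\<Sum>w\<in>S. let p = a w / sum a S in p * ln p)"

lemma entropy_of_weights_le_scaled:
  fixes a b :: "'a \<Rightarrow> real"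
  assumes fin: "finite S" and a_nonneg: "\<And>w. w \<in> S \<Longrightarrow> 0 \<le> a w"
    and lower: "\<And>w. w \<in> S \<Longrightarrow> m * a w \<le> b w" and upper: "\<And>w. w \<in> S \<Longrightarrow> b w \<le> m' * a w"
    and "0 < m" and T: "m' / m \<le> T" and "0 < sum a S"
  shows "entropy_of_weights S a \<le> T * entropy_of_weights S b"
proof -
  define A where "A = sum a S"
  define B where "B = sum b S"
  have "0 < A" using \<open>0 < sum a S\<close> A_def by simp
  have mA_le_B: "m * A \<le> B" and B_le: "B \<le> m' * A"
    unfolding A_def B_def sum_distrib_left using lower upper by (auto intro: sum_mono)
  have "0 < B"
    using mA_le_B \<open>0 < A\<close> \<open>0 < m\<close> by (smt (verit) mult_pos_pos)
  have "m \<le> m'"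
    using mA_le_B B_le \<open>0 < A\<close> by (smt (verit) mult_le_cancel_right_pos)
  hence "1 \<le> T"
    using T \<open>0 < m\<close> by (smt (verit) le_divide_eq_1_pos)
  have b_nonneg: "0 \<le> b w" if "w \<in> S" for w
    using lower[OF that] a_nonneg[OF that] \<open>0 < m\<close> by (smt (verit) mult_nonneg_nonneg)
  have term_le: "- (a w / A * ln (a w / A)) \<le> T * - (b w / B * ln (b w / B))" if w: "w \<in> S" for w
  proof (rule neg_xlnx_le_scaled)
    show "0 \<le> a w / A" "0 \<le> b w / B"
      using a_nonneg b_nonneg w \<open>0 < A\<close> \<open>0 < B\<close> by auto
    show "a w / A \<le> 1" "b w / B \<le> 1"
      using member_le_sum[of w S a] member_le_sum[of w S b] a_nonneg b_nonneg w fin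
        \<open>0 < A\<close> \<open>0 < B\<close> A_def B_def by auto
    show "a w / A \<le> T * (b w / B)"
      using normalized_le_scaled a_nonneg lower w B_le \<open>0 < A\<close> \<open>0 < B\<close> \<open>0 < m\<close> T by blast
    have rest_a: "A - a w = sum a (S - {w})" and rest_b: "B - b w = sum b (S - {w})"
      using w by (simp_all add: sum_diff1[OF fin] A_def B_def)
    have "(A - a w) / A \<le> T * ((B - b w) / B)"
    proof (rule normalized_le_scaled[OF _ _ B_le \<open>0 < A\<close> \<open>0 < B\<close> \<open>0 < m\<close> T])
      show "0 \<le> A - a w"
        unfolding rest_a using a_nonneg by (auto intro: sum_nonneg)
      show "m * (A - a w) \<le> B - b w"
        unfolding rest_a rest_b sum_distrib_left using lower by (auto intro: sum_mono)
    qed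
    then show "1 - a w / A \<le> T * (1 - b w / B)"
      using \<open>0 < A\<close> \<open>0 < B\<close> by (simp add: diff_divide_distrib)
  qed (rule \<open>1 \<le> T\<close>)
  have "entropy_of_weights S a = (\<Sum>w\<in>S. - (a w / A * ln (a w / A)))"
    by (simp add: entropy_of_weights_def A_def sum_negf Let_def)
  also have "\<dots> \<le> (\<Sum>w\<in>S. T * - (b w / B * ln (b w / B)))"
    using term_le by (rule sum_mono)
  also have "\<dots> = T * entropy_of_weights S b"
    by (simp add: entropy_of_weights_def B_def sum_distrib_left sum_negf Let_def)
  finally show ?thesis .
qed

lemma pjoint_snoc:
  "pjoint PY f w (h @ [ys]) = pjoint PY f w h * PY (f (Suc (length h)) w h) ys"
proof -
  have "(\<Prod>t<length h. PY (f (Suc t) w (take t (h @ [ys]))) ((h @ [ys]) ! t))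
      = (\<Prod>t<length h. PY (f (Suc t) w (take t h)) (h ! t))"
    by (intro prod.cong) (auto simp: nth_append)
  then show ?thesis
    unfolding pjoint_def by (simp add: prod.lessThan_Suc)
qed

lemma pjoint_nonneg:
  assumes "\<And>x ys. 0 \<le> PY x ys"
  shows "0 \<le> pjoint PY f w hs"
  unfolding pjoint_def using assms by (intro prod_nonneg) auto

lemma pWY_nonneg:
  assumes "\<And>x ys. 0 \<le> PY x ys"
  shows "0 \<le> pWY K Y PY f M j w yj"
  unfolding pWY_def using pjoint_nonneg[OF assms] by (intro divide_nonneg_nonneg sum_nonneg) auto

lemma hists_proj_snoc:
  "{hs \<in> hists K Y (Suc (length yj)). proj j hs = yj @ [y]} =
     (\<lambda>(h, ys). h @ [ys]) `
       ({hs \<in> hists K Y (length yj). proj j hs = yj} \<times> {ys \<in> PiE {1..K} Y. ys j = y})"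
  (is "?L = (\<lambda>(h, ys). h @ [ys]) ` (?S \<times> ?C)")
proof (intro set_eqI iffI)
  fix hs
  assume hs: "hs \<in> ?L"
  then have "length hs = Suc (length yj)"
    by (simp add: hists_def)
  then obtain h ys where hs_eq: "hs = h @ [ys]"
    by (metis length_Suc_conv_rev)
  have "h \<in> ?S" and "ys \<in> ?C"
    using hs unfolding hs_eq by (auto simp: hists_def proj_def)
  then show "hs \<in> (\<lambda>(h, ys). h @ [ys]) ` (?S \<times> ?C)"
    unfolding hs_eq by (intro image_eqI[of _ _ "(h, ys)"]) auto
next
  fix hs
  assume "hs \<in> (\<lambda>(h, ys). h @ [ys]) ` (?S \<times> ?C)"
  then obtain h ys where "hs = h @ [ys]" "h \<in> ?S" "ys \<in> ?C"
    by auto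
  then show "hs \<in> ?L"
    by (auto simp: hists_def proj_def)
qed

lemma pWY_snoc:
  "pWY K Y PY f M j w (yj @ [y]) =
    (\<Sum>hs\<in>{hs \<in> hists K Y (length yj). proj j hs = yj}.
        pjoint PY f w hs * marg K Y PY j (f (Suc (length yj)) w hs) y) / real M"
proof -
  let ?S = "{hs \<in> hists K Y (length yj). proj j hs = yj}"
  let ?C = "{ys \<in> PiE {1..K} Y. ys j = y}"
  have "inj_on (\<lambda>(h, ys). h @ [ys]) (?S \<times> ?C)"
    by (rule inj_onI) auto
  then have "(\<Sum>hs\<in>{hs \<in> hists K Y (length (yj @ [y])). proj j hs = yj @ [y]}. pjoint PY f w hs)
      = (\<Sum>h\<in>?S. \<Sum>ys\<in>?C. pjoint PY f w (h @ [ys]))"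
    by (simp add: hists_proj_snoc sum.reindex sum.cartesian_product case_prod_unfold)
  also have "\<dots> = (\<Sum>h\<in>?S. pjoint PY f w h * marg K Y PY j (f (Suc (length yj)) w h) y)"
    by (intro sum.cong refl)
      (simp add: pjoint_snoc marg_def sum_distrib_left hists_def)
  finally show ?thesis
    unfolding pWY_def by simp
qed

lemma pWY_snoc_bounds:
  assumes PY_nonneg: "\<And>x ys. 0 \<le> PY x ys"
    and lower: "\<And>x. m \<le> marg K Y PY j x y" and upper: "\<And>x. marg K Y PY j x y \<le> m'"
  shows "m * pWY K Y PY f M j w yj \<le> pWY K Y PY f M j w (yj @ [y])"
    and "pWY K Y PY f M j w (yj @ [y]) \<le> m' * pWY K Y PY f M j w yj"
proof -
  let ?S = "{hs \<in> hists K Y (length yj). proj j hs = yj}"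
  let ?x = "\<lambda>hs. f (Suc (length yj)) w hs"
  note pjoint_nonneg = pjoint_nonneg[OF PY_nonneg]
  have "m * pWY K Y PY f M j w yj = (\<Sum>hs\<in>?S. pjoint PY f w hs * m) / real M"
    unfolding pWY_def by (simp add: sum_distrib_left mult.commute)
  also have "\<dots> \<le> (\<Sum>hs\<in>?S. pjoint PY f w hs * marg K Y PY j (?x hs) y) / real M"
    using pjoint_nonneg lower by (intro divide_right_mono sum_mono mult_left_mono) auto
  finally show "m * pWY K Y PY f M j w yj \<le> pWY K Y PY f M j w (yj @ [y])"
    unfolding pWY_snoc .
  have "(\<Sum>hs\<in>?S. pjoint PY f w hs * marg K Y PY j (?x hs) y) / real M
      \<le> (\<Sum>hs\<in>?S. pjoint PY f w hs * m') / real M"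
    using pjoint_nonneg upper by (intro divide_right_mono sum_mono mult_left_mono) auto
  also have "\<dots> = m' * pWY K Y PY f M j w yj"
    unfolding pWY_def by (simp add: sum_distrib_left mult.commute)
  finally show "pWY K Y PY f M j w (yj @ [y]) \<le> m' * pWY K Y PY f M j w yj"
    unfolding pWY_snoc .
qed

lemma Tconst_ge_ratio:
  fixes PY :: "'x::finite \<Rightarrow> (nat \<Rightarrow> 'y) \<Rightarrow> real"
  assumes "finite (Y j)" "y \<in> Y j"
  shows "marg K Y PY j x y / marg K Y PY j x' y \<le> Tconst K Y PY j"
proof -
  let ?r = "\<lambda>(x, x', y). marg K Y PY j x y / marg K Y PY j x' y"
  have "{marg K Y PY j x y / marg K Y PY j x' y | x x' y. y \<in> Y j} = ?r ` (UNIV \<times> UNIV \<times> Y j)"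
    by (auto simp: image_iff) blast
  then have "finite {marg K Y PY j x y / marg K Y PY j x' y | x x' y. y \<in> Y j}"
    using assms(1) by simp
  then show ?thesis
    unfolding Tconst_def using assms(2) by (intro Max_ge) auto
qed

lemma one_le_Tconst:
  fixes PY :: "'x::finite \<Rightarrow> (nat \<Rightarrow> 'y) \<Rightarrow> real"
  assumes "finite (Y j)" "y \<in> Y j" "0 < marg K Y PY j x y"
  shows "1 \<le> Tconst K Y PY j"
  using Tconst_ge_ratio[where Y = Y and j = j and K = K and PY = PY and x = x and x' = x, OF assms(1,2)] assms(3)
  by simp

lemma condH_eq_entropy_of_weights:
  "condH K Y PY f M j yj = entropy_of_weights {1..M} (\<lambda>w. pWY K Y PY f M j w yj)"
  by (simp add: condH_def entropy_of_weights_def pY_def)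

lemma finite_range_extrema:
  fixes g :: "'a::finite \<Rightarrow> 'b::linorder"
  obtains a b where "\<And>x. g a \<le> g x" and "\<And>x. g x \<le> g b"
proof -
  have "Min (range g) \<in> range g" and "Max (range g) \<in> range g"
    by (rule Min_in Max_in, simp_all)+
  then obtain a b where "g a = Min (range g)" and "g b = Max (range g)"
    by (metis rangeE)
  then have "\<And>x. g a \<le> g x" and "\<And>x. g x \<le> g b"
    by simp_all
  then show ?thesis
    by (rule that)
qed

lemma condH_le_Tconst_mult_condH_snoc:
  fixes PY :: "'x::finite \<Rightarrow> (nat \<Rightarrow> 'y) \<Rightarrow> real"
  assumes "dmbc K Y PY" "j \<in> {1..K}" "\<forall>x. \<forall>y'\<in>Y j. marg K Y PY j x y' > 0" "y \<in> Y j"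
    and "pY K Y PY f M j yj > 0"
  shows "condH K Y PY f M j yj \<le> Tconst K Y PY j * condH K Y PY f M j (yj @ [y])"
proof -
  have PY_nonneg: "\<And>x ys. 0 \<le> PY x ys" and "finite (Y j)"
    using assms(1,2) by (auto simp: dmbc_def)
  obtain xl xh where xl: "\<And>x. marg K Y PY j xl y \<le> marg K Y PY j x y"
    and xh: "\<And>x. marg K Y PY j x y \<le> marg K Y PY j xh y"
    using finite_range_extrema[where g = "\<lambda>x. marg K Y PY j x y"] by blast
  show ?thesis
    unfolding condH_eq_entropy_of_weights
  proof (rule entropy_of_weights_le_scaled)
    fix w
    show "0 \<le> pWY K Y PY f M j w yj"
      by (rule pWY_nonneg[OF PY_nonneg])
    show "marg K Y PY j xl y * pWY K Y PY f M j w yj \<le> pWY K Y PY f M j w (yj @ [y])"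
      and "pWY K Y PY f M j w (yj @ [y]) \<le> marg K Y PY j xh y * pWY K Y PY f M j w yj"
      by (rule pWY_snoc_bounds[OF PY_nonneg xl xh])+
    show "0 < marg K Y PY j xl y"
      using assms(3,4) by simp
    show "marg K Y PY j xh y / marg K Y PY j xl y \<le> Tconst K Y PY j"
      using \<open>finite (Y j)\<close> assms(4) by (rule Tconst_ge_ratio)
    show "0 < (\<Sum>w\<in>{1..M}. pWY K Y PY f M j w yj)"
      using assms(5) by (simp add: pY_def)
  qed simp
qed

theorem lemma7:
  fixes K :: nat and Y :: "nat \<Rightarrow> 'y set" and PY :: "'x::finite \<Rightarrow> (nat \<Rightarrow> 'y) \<Rightarrow> real"
    and M :: nat and N :: real
    and f :: "nat \<Rightarrow> nat \<Rightarrow> (nat \<Rightarrow> 'y) list \<Rightarrow> 'x"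
    and g :: "nat \<Rightarrow> nat \<Rightarrow> 'y list \<Rightarrow> nat"
    and stop :: "nat \<Rightarrow> nat \<Rightarrow> 'y list \<Rightarrow> bool"
    and j n :: nat and y :: 'y and yj :: "'y list"
  assumes "dmbc K Y PY"
    and "vlft_code K Y PY M N f g stop"
    and "j \<in> {1..K}"
    and "\<forall>x. \<forall>y'\<in>Y j. marg K Y PY j x y' > 0"
    and "y \<in> Y j"
    and "length yj = n" and "set yj \<subseteq> Y j"
    and "pY K Y PY f M j yj > 0"
    and "condH K Y PY f M j yj > 0"
  shows "ln (condH K Y PY f M j yj) - ln (condH K Y PY f M j (yj @ [y])) \<le> ln (Tconst K Y PY j)"
proof -
  let ?T = "Tconst K Y PY j"
  let ?H = "condH K Y PY f M j yj" and ?H' = "condH K Y PY f M j (yj @ [y])"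
  have H_le: "?H \<le> ?T * ?H'"
    using assms(1,3,4,5,8) by (rule condH_le_Tconst_mult_condH_snoc)
  have "1 \<le> ?T"
    using assms(1,3,4,5) by (intro one_le_Tconst[of Y j y K PY undefined]) (auto simp: dmbc_def)
  have "0 < ?H'"
    using H_le assms(9) \<open>1 \<le> ?T\<close> by (smt (verit) mult_nonneg_nonpos)
  have "ln ?H \<le> ln (?T * ?H')"
    using H_le assms(9) by simp
  also have "\<dots> = ln ?T + ln ?H'"
    using \<open>1 \<le> ?T\<close> \<open>0 < ?H'\<close> by (simp add: ln_mult)
  finally show ?thesis
    by simp
qed

end
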